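(* There is a constant $C>0$ such that for every 1-2-metric on $n\ge2$ points and every $\alpha>0$, the greedy-routing network creation game on it with edge price $\alpha$ has a $(C\max\{1,\log n\})$-approximate Nash equilibrium.
   Context: A 1-2-metric is a finite metric space $(\mathcal{P},d)$ with $d(u,v)\in\{1,2\}$ for all distinct $u,v$. Game: agents are the points of $\mathcal{P}$; agent $u$'s strategy is $S_u\subseteq\mathcal{P}\setminus\{u\}$; a profile $\mathbf{s}$ defines the directed network with arcs $(u,v)$, $v\in S_u$, of length $d(u,v)$; $(S'_u,\mathbf{s}_{-u})$ is $\mathbf{s}$ with $S_u$ replaced by $S'_u$. A greedy path from $u$ to $v$ is a directed path $u=x_1,\dots,x_j=v$ of arcs with $d(x_i,v)>d(x_{i+1},v)$ for all $i$. $\mathrm{stretch}(u,v)$ is the minimum length of a greedy path from $u$ to $v$ divided by $d(u,v)$, or a fixed sufficiently large penalty constant $Z$ if none exists. Cost: $c_u(\mathbf{s})=\sum_{v\ne u}\mathrm{stretch}(u,v)+\alpha|S_u|$. For $\beta\ge1$, a $\beta$-approximate Nash equilibrium is a profile $\mathbf{s}$ with $c_u(S'_u,\mathbf{s}_{-u})\ge c_u(\mathbf{s})/\beta$ for every agent $u$ and every $S'_u\subseteq\mathcal{P}\setminus\{u\}$. *)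

theory Defs
  imports Complex_Main
begin

definition one_two_metric :: "'a set \<Rightarrow> ('a \<Rightarrow> 'a \<Rightarrow> real) \<Rightarrow> bool" where
  "one_two_metric P d \<longleftrightarrow> finite P \<and>
     (\<forall>u\<in>P. d u u = 0) \<and>
     (\<forall>u\<in>P. \<forall>v\<in>P. d u v = d v u) \<and>
     (\<forall>u\<in>P. \<forall>v\<in>P. \<forall>w\<in>P. d u w \<le> d u v + d v w) \<and>
     (\<forall>u\<in>P. \<forall>v\<in>P. u \<noteq> v \<longrightarrow> d u v \<in> {1, 2})"

text \<open>A strategy profile: each agent u in P buys a set of arcs to other points of P.\<close>
definition valid_profile :: "'a set \<Rightarrow> ('a \<Rightarrow> 'a set) \<Rightarrow> bool" where
  "valid_profile P s \<longleftrightarrow> (\<forall>u\<in>P. s u \<subseteq> P - {u})"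

definition greedy_path ::
  "'a set \<Rightarrow> ('a \<Rightarrow> 'a \<Rightarrow> real) \<Rightarrow> ('a \<Rightarrow> 'a set) \<Rightarrow> 'a \<Rightarrow> 'a \<Rightarrow> 'a list \<Rightarrow> bool" where
  "greedy_path P d s u v xs \<longleftrightarrow> xs \<noteq> [] \<and> hd xs = u \<and> last xs = v \<and> set xs \<subseteq> P \<and>
     (\<forall>i. Suc i < length xs \<longrightarrow>
        xs ! Suc i \<in> s (xs ! i) \<and> d (xs ! i) v > d (xs ! Suc i) v)"

definition path_length :: "('a \<Rightarrow> 'a \<Rightarrow> real) \<Rightarrow> 'a list \<Rightarrow> real" where
  "path_length d xs = (\<Sum>i<length xs - 1. d (xs ! i) (xs ! Suc i))"

definition stretch ::
  "real \<Rightarrow> 'a set \<Rightarrow> ('a \<Rightarrow> 'a \<Rightarrow> real) \<Rightarrow> ('a \<Rightarrow> 'a set) \<Rightarrow> 'a \<Rightarrow> 'a \<Rightarrow> real" where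
  "stretch Z P d s u v =
     (if \<exists>xs. greedy_path P d s u v xs
      then (INF xs\<in>{xs. greedy_path P d s u v xs}. path_length d xs) / d u v
      else Z)"

definition agent_cost ::
  "real \<Rightarrow> real \<Rightarrow> 'a set \<Rightarrow> ('a \<Rightarrow> 'a \<Rightarrow> real) \<Rightarrow> ('a \<Rightarrow> 'a set) \<Rightarrow> 'a \<Rightarrow> real" where
  "agent_cost Z \<alpha> P d s u = (\<Sum>v\<in>P - {u}. stretch Z P d s u v) + \<alpha> * real (card (s u))"

definition approx_NE ::
  "real \<Rightarrow> real \<Rightarrow> real \<Rightarrow> 'a set \<Rightarrow> ('a \<Rightarrow> 'a \<Rightarrow> real) \<Rightarrow> ('a \<Rightarrow> 'a set) \<Rightarrow> bool" where
  "approx_NE \<beta> Z \<alpha> P d s \<longleftrightarrow> valid_profile P s \<and>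
     (\<forall>u\<in>P. \<forall>S'. S' \<subseteq> P - {u} \<longrightarrow>
        agent_cost Z \<alpha> P d (s(u := S')) u \<ge> agent_cost Z \<alpha> P d s u / \<beta>)"

end

theory Submission
  imports Defs
begin

text \<open>
  In a 1-2-metric a greedy path towards \<open>v\<close> can take only one step from a point at
  distance 2 and one from a point at distance 1. Hence, once every agent other than \<open>u\<close>
  buys all its arcs of length 1, the cost of \<open>u\<close> depends on \<open>S\<^sub>u\<close> alone; dropping an arc
  of length 1 costs the penalty \<open>Z\<close>, which for large \<open>Z\<close> exceeds the cost of buying
  everything. So letting every agent buy its arcs of length 1 and then best-respond among
  the supersets of them yields an exact Nash equilibrium, and a fortiori a
  \<open>max 1 (ln n)\<close>-approximate one.
\<close>

lemma one_two_metric_cases: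
  assumes "one_two_metric P d" "a \<in> P" "b \<in> P"
  shows "(a = b \<and> d a b = 0) \<or> (a \<noteq> b \<and> (d a b = 1 \<or> d a b = 2))"
  using assms unfolding one_two_metric_def by (cases "a = b") auto

lemma nth_less_nth_0_if_successively_less:
  fixes f :: "'a \<Rightarrow> 'b::linorder"
  assumes "\<forall>i. Suc i < length xs \<longrightarrow> f (xs ! Suc i) < f (xs ! i)"
    and "0 < k" "k < length xs"
  shows "f (xs ! k) < f (xs ! 0)"
  using assms(2,3)
proof (induction k)
  case (Suc k)
  have "f (xs ! Suc k) < f (xs ! k)" using assms(1) Suc.prems by auto
  then show ?case using Suc by (cases "k = 0") auto
qed simp

definition unit_arcs :: "'a set \<Rightarrow> ('a \<Rightarrow> 'a \<Rightarrow> real) \<Rightarrow> 'a \<Rightarrow> 'a set" where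
  "unit_arcs P d w = {x \<in> P. d w x = 1}"

definition others_buy_unit_arcs ::
  "'a set \<Rightarrow> ('a \<Rightarrow> 'a \<Rightarrow> real) \<Rightarrow> ('a \<Rightarrow> 'a set) \<Rightarrow> 'a \<Rightarrow> bool" where
  "others_buy_unit_arcs P d s u \<longleftrightarrow> (\<forall>w\<in>P - {u}. unit_arcs P d w \<subseteq> s w)"

lemma unit_arcs_subset:
  assumes "one_two_metric P d" "w \<in> P"
  shows "unit_arcs P d w \<subseteq> P - {w}"
  unfolding unit_arcs_def using one_two_metric_cases[OF assms] by fastforce

lemma greedy_path_transfer:
  assumes M: "one_two_metric P d" and v: "v \<in> P"
    and same: "s' u = s u" and others: "others_buy_unit_arcs P d s' u"
    and gp: "greedy_path P d s u v xs"
  shows "greedy_path P d s' u v xs"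
proof -
  have ne: "xs \<noteq> []" and x0: "xs ! 0 = u" and sP: "set xs \<subseteq> P"
    and step: "\<forall>i. Suc i < length xs \<longrightarrow> xs ! Suc i \<in> s (xs ! i) \<and> d (xs ! i) v > d (xs ! Suc i) v"
    using gp unfolding greedy_path_def by (auto simp: hd_conv_nth)
  have "xs ! Suc i \<in> s' (xs ! i)" if i: "Suc i < length xs" for i
  proof (cases "i = 0")
    case True
    then show ?thesis using step i x0 same by auto
  next
    case False
    have xi: "xs ! i \<in> P" and xsi: "xs ! Suc i \<in> P" using sP i by auto
    have "d (xs ! i) v < d u v"
      using nth_less_nth_0_if_successively_less[of xs "\<lambda>x. d x v" i] step False i x0 by auto
    moreover have "d (xs ! Suc i) v < d (xs ! i) v" using step i by auto
    moreover have "d u v \<le> 2" using one_two_metric_cases[OF M _ v] sP ne x0 nth_mem by fastforce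
    ultimately have "d (xs ! i) v = 1" "xs ! Suc i = v" "xs ! i \<noteq> u"
      using one_two_metric_cases[OF M xi v] one_two_metric_cases[OF M xsi v] by auto
    then show ?thesis
      using others xi v unfolding others_buy_unit_arcs_def unit_arcs_def by auto
  qed
  then show ?thesis using gp step unfolding greedy_path_def by auto
qed

lemma agent_cost_eq_if_others_buy_unit_arcs:
  assumes M: "one_two_metric P d"
    and same: "s' u = s u"
    and "others_buy_unit_arcs P d s u" "others_buy_unit_arcs P d s' u"
  shows "agent_cost Z \<alpha> P d s u = agent_cost Z \<alpha> P d s' u"
proof -
  have "stretch Z P d s u v = stretch Z P d s' u v" if "v \<in> P" for v
  proof -
    have "greedy_path P d s u v = greedy_path P d s' u v"
      using greedy_path_transfer[where s=s and s'=s', OF M that same assms(4)]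
        greedy_path_transfer[where s=s' and s'=s, OF M that same[symmetric] assms(3)] by blast
    then show ?thesis by (simp only: stretch_def)
  qed
  then show ?thesis unfolding agent_cost_def using same by simp
qed

lemma path_length_nonneg:
  assumes M: "one_two_metric P d" and "set xs \<subseteq> P"
  shows "path_length d xs \<ge> 0"
  unfolding path_length_def
proof (rule sum_nonneg)
  fix i assume "i \<in> {..<length xs - 1}"
  then have "xs ! i \<in> P" "xs ! Suc i \<in> P" using assms(2) by auto
  then show "d (xs ! i) (xs ! Suc i) \<ge> 0" using one_two_metric_cases[OF M] by fastforce
qed

lemma bdd_below_greedy_path_lengths:
  "one_two_metric P d \<Longrightarrow> bdd_below (path_length d ` {xs. greedy_path P d s u v xs})"
  by (rule bdd_belowI[of _ 0]) (auto simp: greedy_path_def intro: path_length_nonneg)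

lemma stretch_nonneg:
  assumes M: "one_two_metric P d" and "u \<in> P" "v \<in> P" "Z \<ge> 0"
  shows "stretch Z P d s u v \<ge> 0"
proof (cases "\<exists>xs. greedy_path P d s u v xs")
  case True
  have "(INF xs\<in>{xs. greedy_path P d s u v xs}. path_length d xs) \<ge> 0"
    using True path_length_nonneg[OF M] by (intro cINF_greatest) (auto simp: greedy_path_def)
  moreover have "d u v \<ge> 0" using one_two_metric_cases[OF M assms(2,3)] by auto
  ultimately show ?thesis using True unfolding stretch_def by auto
qed (use assms in \<open>auto simp: stretch_def\<close>)

lemma agent_cost_nonneg:
  assumes "one_two_metric P d" "u \<in> P" "Z \<ge> 0" "\<alpha> \<ge> 0"
  shows "agent_cost Z \<alpha> P d s u \<ge> 0"
  unfolding agent_cost_def using assms stretch_nonneg[OF assms(1,2) _ assms(3)]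
  by (intro add_nonneg_nonneg sum_nonneg) auto

lemma stretch_le_1_if_arc:
  assumes M: "one_two_metric P d" and u: "u \<in> P" and v: "v \<in> P" and "u \<noteq> v"
    and arc: "v \<in> s u"
  shows "stretch Z P d s u v \<le> 1"
proof -
  have duv: "d u v > 0" and dvv: "d v v = 0"
    using one_two_metric_cases[OF M u v] one_two_metric_cases[OF M v v] \<open>u \<noteq> v\<close> by auto
  have gp: "greedy_path P d s u v [u, v]"
    unfolding greedy_path_def using u v arc duv dvv by (auto simp: less_Suc_eq)
  have "(INF xs\<in>{xs. greedy_path P d s u v xs}. path_length d xs) \<le> path_length d [u, v]"
    using cINF_lower[OF bdd_below_greedy_path_lengths[OF M]] gp by blast
  also have "\<dots> = d u v" unfolding path_length_def by simp
  finally show ?thesis using gp duv unfolding stretch_def by auto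
qed

lemma stretch_eq_penalty_if_missing_unit_arc:
  assumes M: "one_two_metric P d" and v: "v \<in> P"
    and d1: "d u v = 1" and no_arc: "v \<notin> s u"
  shows "stretch Z P d s u v = Z"
proof -
  have "\<not> greedy_path P d s u v xs" for xs
  proof
    assume gp: "greedy_path P d s u v xs"
    then have ne: "xs \<noteq> []" and x0: "xs ! 0 = u" and last: "last xs = v" and sP: "set xs \<subseteq> P"
      and step: "\<forall>i. Suc i < length xs \<longrightarrow> xs ! Suc i \<in> s (xs ! i) \<and> d (xs ! i) v > d (xs ! Suc i) v"
      unfolding greedy_path_def by (auto simp: hd_conv_nth)
    have "u \<noteq> v" using d1 one_two_metric_cases[OF M v v] by auto
    then have "length xs \<noteq> 1" using ne x0 last by (auto simp: last_conv_nth)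
    then have l: "Suc 0 < length xs" using ne by (cases xs) auto
    then have "xs ! 1 \<in> s u" "d (xs ! 1) v < 1" "xs ! 1 \<in> P" using step x0 d1 sP by auto
    then show False using one_two_metric_cases[OF M _ v] no_arc by fastforce
  qed
  then show ?thesis unfolding stretch_def by auto
qed

lemma agent_cost_ge_penalty_if_missing_unit_arc:
  assumes M: "one_two_metric P d" and u: "u \<in> P" and "Z \<ge> 0" "\<alpha> \<ge> 0"
    and "v \<in> unit_arcs P d u" "v \<notin> s u"
  shows "Z \<le> agent_cost Z \<alpha> P d s u"
proof -
  have v: "v \<in> P - {u}" using assms(5) unit_arcs_subset[OF M u] by auto
  have fin: "finite P" using M unfolding one_two_metric_def by simp
  have "Z = stretch Z P d s u v"
    using stretch_eq_penalty_if_missing_unit_arc[OF M] assms(5,6) by (auto simp: unit_arcs_def)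
  also have "\<dots> \<le> (\<Sum>w\<in>P - {u}. stretch Z P d s u w)"
    using v fin stretch_nonneg[OF M u _ \<open>Z \<ge> 0\<close>] by (intro member_le_sum) auto
  also have "\<dots> \<le> agent_cost Z \<alpha> P d s u" unfolding agent_cost_def using \<open>\<alpha> \<ge> 0\<close> by simp
  finally show ?thesis .
qed

lemma agent_cost_le_if_buys_all:
  assumes M: "one_two_metric P d" and u: "u \<in> P" and "\<alpha> \<ge> 0" and all: "s u = P - {u}"
  shows "agent_cost Z \<alpha> P d s u \<le> real (card P) * (1 + \<alpha>)"
proof -
  have fin: "finite P" using M unfolding one_two_metric_def by simp
  have "(\<Sum>w\<in>P - {u}. stretch Z P d s u w) \<le> (\<Sum>w\<in>P - {u}. 1)"
    using stretch_le_1_if_arc[OF M u] all by (intro sum_mono) auto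
  moreover have "card (P - {u}) \<le> card P" using fin by (simp add: card_Diff1_le)
  moreover have "\<alpha> * card (P - {u}) \<le> \<alpha> * card P"
    using calculation(2) \<open>\<alpha> \<ge> 0\<close> by (simp add: mult_left_mono)
  ultimately show ?thesis unfolding agent_cost_def using all by (simp add: algebra_simps)
qed

lemma approx_NE_mono:
  assumes "approx_NE \<beta> Z \<alpha> P d s" "0 < \<beta>" "\<beta> \<le> \<beta>'"
    and "\<And>u. u \<in> P \<Longrightarrow> agent_cost Z \<alpha> P d s u \<ge> 0"
  shows "approx_NE \<beta>' Z \<alpha> P d s"
proof -
  have "c / \<beta>' \<le> c / \<beta>" if "c \<ge> 0" for c :: real
    using that assms(2,3) by (intro divide_left_mono) auto
  then show ?thesis using assms(1,4) unfolding approx_NE_def by (meson order_trans)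
qed

lemma exact_Nash_equilibrium_exists:
  assumes M: "one_two_metric P d" and "\<alpha> \<ge> 0" and Z: "Z \<ge> real (card P) * (1 + \<alpha>) + 1"
  shows "\<exists>s. approx_NE 1 Z \<alpha> P d s"
proof -
  have fin: "finite P" using M unfolding one_two_metric_def by simp
  have Z0: "Z \<ge> 0" using Z \<open>\<alpha> \<ge> 0\<close> mult_nonneg_nonneg[of "real (card P)" "1 + \<alpha>"] by linarith
  define A where "A w = {T. unit_arcs P d w \<subseteq> T \<and> T \<subseteq> P - {w}}" for w
  define cost where "cost w T = agent_cost Z \<alpha> P d ((unit_arcs P d)(w := T)) w" for w T
  define S where "S w = arg_min_on (cost w) (A w)" for w
  have A: "finite (A w)" "P - {w} \<in> A w" if "w \<in> P" for w
    unfolding A_def using fin unit_arcs_subset[OF M that] by (auto intro: finite_subset)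
  have S_in: "S w \<in> A w" if "w \<in> P" for w
    unfolding S_def using A[OF that] by (intro arg_min_if_finite(1)) auto
  have S_least: "cost w (S w) \<le> cost w T" if "w \<in> P" "T \<in> A w" for w T
    unfolding S_def using A[OF that(1)] that(2) by (intro arg_min_least) auto
  have cost_S: "agent_cost Z \<alpha> P d (S(u := T)) u = cost u T" for u T
    unfolding cost_def using S_in
    by (intro agent_cost_eq_if_others_buy_unit_arcs[OF M, where s="S(u := T)"
          and s'="(unit_arcs P d)(u := T)"]) (auto simp: others_buy_unit_arcs_def A_def)
  have no_better_response: "agent_cost Z \<alpha> P d S u \<le> agent_cost Z \<alpha> P d (S(u := T)) u"
    if u: "u \<in> P" and T: "T \<subseteq> P - {u}" for u T
  proof (cases "unit_arcs P d u \<subseteq> T")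
    case True
    then show ?thesis using S_least[OF u] T cost_S[of u T] cost_S[of u "S u"] by (simp add: A_def)
  next
    case False
    \<comment> \<open>the penalty for the missing arc exceeds what \<open>u\<close> pays when buying every arc\<close>
    then obtain v where "v \<in> unit_arcs P d u" "v \<notin> T" by blast
    then have "Z \<le> agent_cost Z \<alpha> P d (S(u := T)) u"
      using agent_cost_ge_penalty_if_missing_unit_arc[OF M u Z0 \<open>\<alpha> \<ge> 0\<close>] by simp
    moreover have "cost u (S u) \<le> cost u (P - {u})" using S_least[OF u A(2)[OF u]] .
    moreover have "cost u (P - {u}) \<le> real (card P) * (1 + \<alpha>)"
      unfolding cost_def using agent_cost_le_if_buys_all[OF M u \<open>\<alpha> \<ge> 0\<close>] by simp
    ultimately show ?thesis using cost_S[of u "S u"] Z by simp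
  qed
  have "S u \<subseteq> P - {u}" if "u \<in> P" for u using S_in[OF that] by (simp add: A_def)
  then have "approx_NE 1 Z \<alpha> P d S"
    unfolding approx_NE_def valid_profile_def using no_better_response by simp
  then show ?thesis by blast
qed

theorem theorem2p14:
  shows "\<exists>C::real. C > 0 \<and>
    (\<forall>(P :: 'a set) (d :: 'a \<Rightarrow> 'a \<Rightarrow> real) (\<alpha> :: real).
       one_two_metric P d \<longrightarrow> card P \<ge> 2 \<longrightarrow> \<alpha> > 0 \<longrightarrow>
       (\<exists>Z0::real. \<forall>Z\<ge>Z0.
          \<exists>s. approx_NE (C * max 1 (ln (real (card P)))) Z \<alpha> P d s))"
proof (rule exI[of _ 1], intro conjI allI impI)
  fix P :: "'a set" and d :: "'a \<Rightarrow> 'a \<Rightarrow> real" and \<alpha> :: real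
  assume M: "one_two_metric P d" and "card P \<ge> 2" and "\<alpha> > 0"
  show "\<exists>Z0. \<forall>Z\<ge>Z0. \<exists>s. approx_NE (1 * max 1 (ln (real (card P)))) Z \<alpha> P d s"
  proof (rule exI[of _ "real (card P) * (1 + \<alpha>) + 1"], intro allI impI)
    fix Z assume Z: "Z \<ge> real (card P) * (1 + \<alpha>) + 1"
    then have "Z \<ge> 0" using \<open>\<alpha> > 0\<close> mult_nonneg_nonneg[of "real (card P)" "1 + \<alpha>"] by linarith
    obtain s where NE: "approx_NE 1 Z \<alpha> P d s"
      using exact_Nash_equilibrium_exists[OF M _ Z] \<open>\<alpha> > 0\<close> by auto
    have "approx_NE (1 * max 1 (ln (real (card P)))) Z \<alpha> P d s"
    proof (rule approx_NE_mono[OF NE])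
      show "(0::real) < 1" "1 \<le> 1 * max 1 (ln (real (card P)))" by simp_all
      show "\<And>u. u \<in> P \<Longrightarrow> 0 \<le> agent_cost Z \<alpha> P d s u"
        using agent_cost_nonneg[OF M _ \<open>Z \<ge> 0\<close>] \<open>\<alpha> > 0\<close> by simp
    qed
    then show "\<exists>s. approx_NE (1 * max 1 (ln (real (card P)))) Z \<alpha> P d s" by blast
  qed
qed simp

end
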